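(* For every $k\in\mathbb{N}$ there exists an instance $\mathcal{I}$ of the Strip Packing Problem in which all rectangles are squares, together with an initial ordering of its squares, such that the bottom-left $k$-local search algorithm started from this ordering returns a packing of height $h_{\text{$k$-BL}}(\mathcal{I}) = 2\cdot h_{\text{OPT}}(\mathcal{I})$.
   Context: Strip Packing Problem: given a strip width $W>0$ and rectangles $r_1,\dots,r_n$ with widths $w_i\le W$ and heights $h_i$, a packing assigns to each $r_i$ a lower-left corner $(x_i,y_i)$; it is feasible if $x_i\ge 0$, $x_i+w_i\le W$, $y_i\ge 0$ and the open rectangles $(x_i,x_i+w_i)\times(y_i,y_i+h_i)$ are pairwise disjoint; no rotations. The height of a packing is $\max_i(y_i+h_i)$ and $h_{\text{OPT}}(\mathcal{I})$ is the minimum height of a feasible packing. Bottom-left algorithm: given an ordering, place the first rectangle at $(0,0)$ and then each subsequent rectangle at a feasible position $(x,y)$ (feasible together with those already placed) with $(y,x)$ lexicographically minimal. Bottom-left $k$-local search algorithm: start with an initial ordering and its bottom-left packing. In each iteration (improvement step), look for a new ordering obtained from the current one by permuting at most $k$ rectangles in the ordering such that the bottom-left packing of the new ordering has strictly smaller height; if one exists, replace the current ordering by it. Stop when no such improvement exists (a local optimum). $h_{\text{$k$-BL}}(\mathcal{I})$ denotes the height of the returned packing. *)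

theory Defs
  imports Main Complex_Main
begin

text \<open>An instance: strip width W, n rectangles indexed 0..<n with widths w i and heights h i.
  A placement assigns lower-left corners (x i, y i).\<close>

definition open_rect :: "real \<Rightarrow> real \<Rightarrow> real \<Rightarrow> real \<Rightarrow> (real \<times> real) set" where
  "open_rect a b wd ht = {(p, q). a < p \<and> p < a + wd \<and> b < q \<and> q < b + ht}"

definition feasible_pos ::
  "real \<Rightarrow> (nat \<Rightarrow> real) \<Rightarrow> (nat \<Rightarrow> real) \<Rightarrow> nat set \<Rightarrow> (nat \<Rightarrow> real) \<Rightarrow> (nat \<Rightarrow> real)
     \<Rightarrow> nat \<Rightarrow> real \<Rightarrow> real \<Rightarrow> bool" where
  "feasible_pos W w h S x y r a b \<longleftrightarrow>
     0 \<le> a \<and> a + w r \<le> W \<and> 0 \<le> b \<and>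
     (\<forall>i\<in>S. open_rect a b (w r) (h r) \<inter> open_rect (x i) (y i) (w i) (h i) = {})"

definition feasible_packing ::
  "real \<Rightarrow> nat \<Rightarrow> (nat \<Rightarrow> real) \<Rightarrow> (nat \<Rightarrow> real) \<Rightarrow> (nat \<Rightarrow> real) \<Rightarrow> (nat \<Rightarrow> real) \<Rightarrow> bool" where
  "feasible_packing W n w h x y \<longleftrightarrow>
     (\<forall>i<n. 0 \<le> x i \<and> x i + w i \<le> W \<and> 0 \<le> y i) \<and>
     (\<forall>i<n. \<forall>j<n. i \<noteq> j \<longrightarrow>
        open_rect (x i) (y i) (w i) (h i) \<inter> open_rect (x j) (y j) (w j) (h j) = {})"

definition packing_height :: "nat \<Rightarrow> (nat \<Rightarrow> real) \<Rightarrow> (nat \<Rightarrow> real) \<Rightarrow> real" where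
  "packing_height n h y = Max ((\<lambda>i. y i + h i) ` {..<n})"

definition h_opt :: "real \<Rightarrow> nat \<Rightarrow> (nat \<Rightarrow> real) \<Rightarrow> (nat \<Rightarrow> real) \<Rightarrow> real" where
  "h_opt W n w h = Inf {packing_height n h y | x y. feasible_packing W n w h x y}"

definition is_ordering :: "nat \<Rightarrow> nat list \<Rightarrow> bool" where
  "is_ordering n \<sigma> \<longleftrightarrow> distinct \<sigma> \<and> set \<sigma> = {..<n}"

definition is_BL_packing ::
  "real \<Rightarrow> (nat \<Rightarrow> real) \<Rightarrow> (nat \<Rightarrow> real) \<Rightarrow> nat list \<Rightarrow> (nat \<Rightarrow> real) \<Rightarrow> (nat \<Rightarrow> real) \<Rightarrow> bool" where
  "is_BL_packing W w h \<sigma> x y \<longleftrightarrow>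
     (\<forall>j<length \<sigma>. let r = \<sigma> ! j; S = set (take j \<sigma>) in
        feasible_pos W w h S x y r (x r) (y r) \<and>
        (\<forall>a b. feasible_pos W w h S x y r a b \<longrightarrow> y r < b \<or> (y r = b \<and> x r \<le> a)))"

definition BL_height ::
  "real \<Rightarrow> nat \<Rightarrow> (nat \<Rightarrow> real) \<Rightarrow> (nat \<Rightarrow> real) \<Rightarrow> nat list \<Rightarrow> real" where
  "BL_height W n w h \<sigma> =
     (THE H. \<exists>x y. is_BL_packing W w h \<sigma> x y \<and> H = packing_height n h y)"

definition k_perm :: "nat \<Rightarrow> nat \<Rightarrow> nat list \<Rightarrow> nat list \<Rightarrow> bool" where
  "k_perm n k \<sigma> \<sigma>' \<longleftrightarrow> is_ordering n \<sigma>' \<and> length \<sigma>' = length \<sigma> \<and>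
     card {i. i < length \<sigma> \<and> \<sigma> ! i \<noteq> \<sigma>' ! i} \<le> k"

definition improvement_step ::
  "real \<Rightarrow> nat \<Rightarrow> (nat \<Rightarrow> real) \<Rightarrow> (nat \<Rightarrow> real) \<Rightarrow> nat \<Rightarrow> nat list \<Rightarrow> nat list \<Rightarrow> bool" where
  "improvement_step W n w h k \<sigma> \<sigma>' \<longleftrightarrow>
     k_perm n k \<sigma> \<sigma>' \<and> BL_height W n w h \<sigma>' < BL_height W n w h \<sigma>"

definition local_optimum ::
  "real \<Rightarrow> nat \<Rightarrow> (nat \<Rightarrow> real) \<Rightarrow> (nat \<Rightarrow> real) \<Rightarrow> nat \<Rightarrow> nat list \<Rightarrow> bool" where
  "local_optimum W n w h k \<sigma> \<longleftrightarrow> \<not> (\<exists>\<sigma>'. improvement_step W n w h k \<sigma> \<sigma>')"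

end

theory Submission
  imports Defs "HOL-Library.Product_Lexorder"
begin

text \<open>The instance consists of M = k + 4 big squares of side N = 2k + 3 and N unit squares in a
  strip of width MN + 1. The big squares side by side and the unit squares stacked in the remaining
  column give height N, which is optimal. In the initial ordering every square but the last big one
  fits on the floor, so its bottom-left packing has height 2N. An ordering that differs from it in
  at most k positions still has two unit squares among its first M - 1 entries and a big square
  between two unit squares. In its bottom-left packing all squares before the last big square lie
  on the floor, and the gaps they leave are narrower than N, so the last big square is pushed up
  to height N and the packing has height at least 2N. Hence local search stops at once.\<close>

lemma open_rect_disjoint_iff:
  assumes "0 < w1" "0 < h1" "0 < w2" "0 < h2"
  shows "open_rect a1 b1 w1 h1 \<inter> open_rect a2 b2 w2 h2 = {} \<longleftrightarrow>
         a1 + w1 \<le> a2 \<or> a2 + w2 \<le> a1 \<or> b1 + h1 \<le> b2 \<or> b2 + h2 \<le> b1"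
proof
  assume disj: "open_rect a1 b1 w1 h1 \<inter> open_rect a2 b2 w2 h2 = {}"
  show "a1 + w1 \<le> a2 \<or> a2 + w2 \<le> a1 \<or> b1 + h1 \<le> b2 \<or> b2 + h2 \<le> b1"
  proof (rule ccontr)
    assume "\<not> ?thesis"
    then have "((max a1 a2 + min (a1 + w1) (a2 + w2)) / 2, (max b1 b2 + min (b1 + h1) (b2 + h2)) / 2)
        \<in> open_rect a1 b1 w1 h1 \<inter> open_rect a2 b2 w2 h2"
      using assms unfolding open_rect_def by (auto simp: max_def min_def)
    then show False
      using disj by blast
  qed
qed (auto simp: open_rect_def)

lemma feasible_pos_cong:
  "(\<And>i. i \<in> S \<Longrightarrow> x i = x' i \<and> y i = y' i) \<Longrightarrow>
   feasible_pos W w h S x y = feasible_pos W w h S x' y'"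
  unfolding feasible_pos_def by (intro ext) auto

lemma feasible_pos_separated:
  assumes "\<forall>i. 0 < w i \<and> 0 < h i" "feasible_pos W w h S x y r a b" "i \<in> S"
  shows "a + w r \<le> x i \<or> x i + w i \<le> a \<or> b + h r \<le> y i \<or> y i + h i \<le> b"
  using assms open_rect_disjoint_iff unfolding feasible_pos_def by blast

lemma greatest_below:
  fixes T :: "'a::linorder set"
  assumes "finite T" "t0 \<in> T" "t0 \<le> a"
  obtains a' where "a' \<in> T" "a' \<le> a" "\<And>t. t \<in> T \<Longrightarrow> t \<le> a \<Longrightarrow> t \<le> a'"
proof
  have "finite {t \<in> T. t \<le> a}" "t0 \<in> {t \<in> T. t \<le> a}"
    using assms by auto
  then show "Max {t \<in> T. t \<le> a} \<in> T" "Max {t \<in> T. t \<le> a} \<le> a"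
    using Max_in by blast+
  show "\<And>t. t \<in> T \<Longrightarrow> t \<le> a \<Longrightarrow> t \<le> Max {t \<in> T. t \<le> a}"
    using \<open>finite {t \<in> T. t \<le> a}\<close> by simp
qed

text \<open>A feasible position can be slid left and down until its left side touches 0 or the right
  side of a placed rectangle, and likewise its bottom side; so the bottom-left position is the
  lexicographic minimum over finitely many candidates.\<close>
lemma feasible_pos_slide:
  assumes fin: "finite S" and pos: "\<forall>i. 0 < w i \<and> 0 < h i"
    and feas: "feasible_pos W w h S x y r a b"
  obtains a' b' where "a' \<in> insert 0 ((\<lambda>i. x i + w i) ` S)" "b' \<in> insert 0 ((\<lambda>i. y i + h i) ` S)"
    "a' \<le> a" "b' \<le> b" "feasible_pos W w h S x y r a' b'"
proof -
  define Xs where "Xs = insert 0 ((\<lambda>i. x i + w i) ` S)"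
  define Ys where "Ys = insert 0 ((\<lambda>i. y i + h i) ` S)"
  have "finite Xs" "finite Ys" "0 \<in> Xs" "0 \<in> Ys"
    using fin by (simp_all add: Xs_def Ys_def)
  have "0 \<le> a" "0 \<le> b"
    using feas unfolding feasible_pos_def by auto
  obtain a' where a': "a' \<in> Xs" "a' \<le> a" "\<And>t. t \<in> Xs \<Longrightarrow> t \<le> a \<Longrightarrow> t \<le> a'"
    using greatest_below[OF \<open>finite Xs\<close> \<open>0 \<in> Xs\<close> \<open>0 \<le> a\<close>] by blast
  obtain b' where b': "b' \<in> Ys" "b' \<le> b" "\<And>t. t \<in> Ys \<Longrightarrow> t \<le> b \<Longrightarrow> t \<le> b'"
    using greatest_below[OF \<open>finite Ys\<close> \<open>0 \<in> Ys\<close> \<open>0 \<le> b\<close>] by blast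
  have "feasible_pos W w h S x y r a' b'"
    unfolding feasible_pos_def
  proof (intro conjI ballI)
    show "0 \<le> a'" "0 \<le> b'"
      using a'(3) b'(3) \<open>0 \<le> a\<close> \<open>0 \<le> b\<close> \<open>0 \<in> Xs\<close> \<open>0 \<in> Ys\<close> by auto
    show "a' + w r \<le> W"
      using a'(2) feas unfolding feasible_pos_def by auto
    fix i assume "i \<in> S"
    then have "a + w r \<le> x i \<or> x i + w i \<le> a \<or> b + h r \<le> y i \<or> y i + h i \<le> b"
      using feasible_pos_separated[OF pos feas] by blast
    moreover have "x i + w i \<in> Xs" "y i + h i \<in> Ys"
      using \<open>i \<in> S\<close> by (auto simp: Xs_def Ys_def)
    ultimately have "a' + w r \<le> x i \<or> x i + w i \<le> a' \<or> b' + h r \<le> y i \<or> y i + h i \<le> b'"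
      using a'(2,3) b'(2,3) by (smt (verit))
    then show "open_rect a' b' (w r) (h r) \<inter> open_rect (x i) (y i) (w i) (h i) = {}"
      using open_rect_disjoint_iff pos by blast
  qed
  with a'(1,2) b'(1,2) show ?thesis
    by (intro that) (simp_all add: Xs_def Ys_def)
qed

lemma bottom_left_position_exists:
  assumes fin: "finite S" and pos: "\<forall>i. 0 < w i \<and> 0 < h i" and fits: "w r \<le> W"
  obtains a b where "feasible_pos W w h S x y r a b"
    "\<And>a' b'. feasible_pos W w h S x y r a' b' \<Longrightarrow> b < b' \<or> (b = b' \<and> a \<le> a')"
proof -
  define C where "C = {(b, a) | a b. a \<in> insert 0 ((\<lambda>i. x i + w i) ` S) \<and>
    b \<in> insert 0 ((\<lambda>i. y i + h i) ` S) \<and> feasible_pos W w h S x y r a b}"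
  have below: "\<exists>c\<in>C. c \<le> (b, a)" if feas: "feasible_pos W w h S x y r a b" for a b
  proof -
    obtain a' b' where "a' \<in> insert 0 ((\<lambda>i. x i + w i) ` S)" "b' \<in> insert 0 ((\<lambda>i. y i + h i) ` S)"
      "a' \<le> a" "b' \<le> b" "feasible_pos W w h S x y r a' b'"
      by (rule feasible_pos_slide[OF fin pos feas])
    then have "(b', a') \<in> C" "(b', a') \<le> (b, a)"
      unfolding C_def by auto
    then show ?thesis
      by blast
  qed
  define B where "B = Max (insert 0 ((\<lambda>i. y i + h i) ` S))"
  have "feasible_pos W w h S x y r 0 B"
    unfolding feasible_pos_def
  proof (intro conjI ballI)
    fix i assume "i \<in> S"
    then have "y i + h i \<le> B"
      using fin by (simp add: B_def)
    then show "open_rect 0 B (w r) (h r) \<inter> open_rect (x i) (y i) (w i) (h i) = {}"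
      using open_rect_disjoint_iff pos by blast
  qed (use fits fin in \<open>simp_all add: B_def\<close>)
  then have "C \<noteq> {}"
    using below by blast
  moreover have "finite C"
    by (rule finite_subset[of _ "insert 0 ((\<lambda>i. y i + h i) ` S) \<times> insert 0 ((\<lambda>i. x i + w i) ` S)"])
      (use fin in \<open>auto simp: C_def\<close>)
  ultimately have "Min C \<in> C" "\<And>c. c \<in> C \<Longrightarrow> Min C \<le> c"
    by simp_all
  then obtain a b where ab: "(b, a) = Min C" "feasible_pos W w h S x y r a b"
    by (auto simp: C_def)
  show ?thesis
  proof (rule that[OF ab(2)])
    fix a' b' assume "feasible_pos W w h S x y r a' b'"
    then obtain c where "c \<in> C" "c \<le> (b', a')"
      using below by blast
    then have "(b, a) \<le> (b', a')"
      using \<open>\<And>c. c \<in> C \<Longrightarrow> Min C \<le> c\<close> ab(1) by (metis order_trans)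
    then show "b < b' \<or> (b = b' \<and> a \<le> a')"
      by auto
  qed
qed

lemma is_BL_packingD:
  assumes "is_BL_packing W w h \<sigma> x y" "j < length \<sigma>"
  shows "feasible_pos W w h (set (take j \<sigma>)) x y (\<sigma> ! j) (x (\<sigma> ! j)) (y (\<sigma> ! j))"
    and "\<And>a b. feasible_pos W w h (set (take j \<sigma>)) x y (\<sigma> ! j) a b \<Longrightarrow>
           y (\<sigma> ! j) < b \<or> (y (\<sigma> ! j) = b \<and> x (\<sigma> ! j) \<le> a)"
  using assms unfolding is_BL_packing_def Let_def by blast+

lemma is_BL_packing_Nil [simp]: "is_BL_packing W w h [] x y"
  by (simp add: is_BL_packing_def)

lemma is_BL_packing_snoc:
  "is_BL_packing W w h (\<sigma> @ [r]) x y \<longleftrightarrow>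
     is_BL_packing W w h \<sigma> x y \<and> feasible_pos W w h (set \<sigma>) x y r (x r) (y r) \<and>
     (\<forall>a b. feasible_pos W w h (set \<sigma>) x y r a b \<longrightarrow> y r < b \<or> (y r = b \<and> x r \<le> a))"
  unfolding is_BL_packing_def Let_def
  by (simp add: All_less_Suc nth_append conj_commute)

lemma is_BL_packing_cong:
  "(\<And>i. i \<in> set \<sigma> \<Longrightarrow> x i = x' i \<and> y i = y' i) \<Longrightarrow>
   is_BL_packing W w h \<sigma> x y \<longleftrightarrow> is_BL_packing W w h \<sigma> x' y'"
proof (induction \<sigma> rule: rev_induct)
  case (snoc r \<sigma>)
  then have "feasible_pos W w h (set \<sigma>) x y = feasible_pos W w h (set \<sigma>) x' y'"
    by (intro feasible_pos_cong) simp
  with snoc show ?case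
    by (simp add: is_BL_packing_snoc)
qed simp

lemma is_BL_packing_exists:
  assumes "distinct \<sigma>" "\<forall>i. 0 < w i \<and> 0 < h i \<and> w i \<le> W"
  obtains x y where "is_BL_packing W w h \<sigma> x y"
  using assms(1)
proof (induction \<sigma> arbitrary: thesis rule: rev_induct)
  case (snoc r \<sigma>)
  then obtain x y where BL: "is_BL_packing W w h \<sigma> x y" and "r \<notin> set \<sigma>"
    by auto
  obtain a b where "feasible_pos W w h (set \<sigma>) x y r a b"
    "\<And>a' b'. feasible_pos W w h (set \<sigma>) x y r a' b' \<Longrightarrow> b < b' \<or> (b = b' \<and> a \<le> a')"
    using bottom_left_position_exists[of "set \<sigma>" w h r W] assms(2) by blast
  moreover have "feasible_pos W w h (set \<sigma>) x y = feasible_pos W w h (set \<sigma>) (x(r := a)) (y(r := b))"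
    using \<open>r \<notin> set \<sigma>\<close> by (intro feasible_pos_cong) auto
  moreover have "is_BL_packing W w h \<sigma> (x(r := a)) (y(r := b))"
    using \<open>r \<notin> set \<sigma>\<close> BL by (subst is_BL_packing_cong[of \<sigma> _ x _ y]) auto
  ultimately show ?case
    using snoc.prems(1) by (metis fun_upd_same is_BL_packing_snoc)
qed simp

lemma is_BL_packing_unique:
  assumes "is_BL_packing W w h \<sigma> x y" "is_BL_packing W w h \<sigma> x' y'" "i \<in> set \<sigma>"
  shows "x i = x' i \<and> y i = y' i"
  using assms
proof (induction \<sigma> arbitrary: i rule: rev_induct)
  case (snoc r \<sigma>)
  have "is_BL_packing W w h \<sigma> x y" "is_BL_packing W w h \<sigma> x' y'"
    using snoc.prems(1,2) by (simp_all only: is_BL_packing_snoc)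
  then have agree: "\<And>i. i \<in> set \<sigma> \<Longrightarrow> x i = x' i \<and> y i = y' i"
    using snoc.IH by blast
  show ?case
  proof (cases "i \<in> set \<sigma>")
    case False
    then have "i = r"
      using snoc.prems(3) by simp
    have "feasible_pos W w h (set \<sigma>) x' y' = feasible_pos W w h (set \<sigma>) x y"
      using agree by (intro feasible_pos_cong) auto
    then have "y r < y' r \<or> (y r = y' r \<and> x r \<le> x' r)" "y' r < y r \<or> (y' r = y r \<and> x' r \<le> x r)"
      using snoc.prems(1,2) by (simp_all add: is_BL_packing_snoc)
    then show ?thesis
      using \<open>i = r\<close> by auto
  qed (use agree in simp)
qed simp

lemma BL_height_eq:
  assumes "is_ordering n \<sigma>" "is_BL_packing W w h \<sigma> x y"
  shows "BL_height W n w h \<sigma> = packing_height n h y"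
  unfolding BL_height_def
proof (rule the_equality)
  fix H assume "\<exists>x' y'. is_BL_packing W w h \<sigma> x' y' \<and> H = packing_height n h y'"
  then obtain x' y' where BL': "is_BL_packing W w h \<sigma> x' y'" and H: "H = packing_height n h y'"
    by blast
  have "y' i = y i" if "i < n" for i
    using is_BL_packing_unique[OF assms(2) BL', of i] assms(1) that by (simp add: is_ordering_def)
  then show "H = packing_height n h y"
    unfolding H packing_height_def by (intro arg_cong[where f = Max] image_cong) auto
qed (use assms(2) in blast)

lemma packing_height_ge:
  "i < n \<Longrightarrow> y i + h i \<le> packing_height n h y"
  unfolding packing_height_def by (intro Max_ge) auto

lemma packing_height_le:
  "0 < n \<Longrightarrow> (\<And>i. i < n \<Longrightarrow> y i + h i \<le> H) \<Longrightarrow> packing_height n h y \<le> H"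
  unfolding packing_height_def by (subst Max_le_iff) auto

definition prefix_width :: "(nat \<Rightarrow> real) \<Rightarrow> nat list \<Rightarrow> nat \<Rightarrow> real" where
  "prefix_width w \<sigma> l = (\<Sum>i<l. w (\<sigma> ! i))"

lemma prefix_width_Suc: "prefix_width w \<sigma> (Suc l) = prefix_width w \<sigma> l + w (\<sigma> ! l)"
  by (simp add: prefix_width_def)

lemma prefix_width_mono:
  "(\<And>i. 0 \<le> w i) \<Longrightarrow> l \<le> l' \<Longrightarrow> prefix_width w \<sigma> l \<le> prefix_width w \<sigma> l'"
  unfolding prefix_width_def by (rule sum_mono2) auto

lemma partial_sum_interval:
  fixes g :: "nat \<Rightarrow> 'a::{linorder, comm_monoid_add}"
  assumes "0 \<le> u" "u < (\<Sum>i<l. g i)"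
  obtains m where "m < l" "(\<Sum>i<m. g i) \<le> u" "u < (\<Sum>i<Suc m. g i)"
proof -
  have "\<exists>m<l. (\<Sum>i<m. g i) \<le> u \<and> u < (\<Sum>i<Suc m. g i)"
    using assms(2)
  proof (induction l)
    case (Suc l)
    then show ?case
      by (cases "u < (\<Sum>i<l. g i)") (auto simp del: sum.lessThan_Suc intro: less_SucI)
  qed (use assms(1) in simp)
  then show ?thesis
    using that by blast
qed

lemma feasible_pos_floor_row_end:
  assumes pos: "\<forall>i. 0 < w i \<and> 0 < h i" and "j \<le> length \<sigma>"
    and row: "\<And>m. m < j \<Longrightarrow> x (\<sigma> ! m) = prefix_width w \<sigma> m \<and> y (\<sigma> ! m) = 0"
    and "prefix_width w \<sigma> j + w r \<le> W"
  shows "feasible_pos W w h (set (take j \<sigma>)) x y r (prefix_width w \<sigma> j) 0"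
  unfolding feasible_pos_def
proof (intro conjI ballI)
  show "0 \<le> prefix_width w \<sigma> j"
    using prefix_width_mono[of w 0 j] pos by (simp add: less_imp_le prefix_width_def)
  fix i assume "i \<in> set (take j \<sigma>)"
  then obtain m where "m < j" "i = \<sigma> ! m"
    using assms(2) by (auto simp: in_set_conv_nth)
  then have "x i + w i \<le> prefix_width w \<sigma> j"
    using row prefix_width_mono[of w "Suc m" j] pos by (simp add: less_imp_le prefix_width_Suc)
  then show "open_rect (prefix_width w \<sigma> j) 0 (w r) (h r) \<inter> open_rect (x i) (y i) (w i) (h i) = {}"
    using open_rect_disjoint_iff pos by blast
qed (use assms(4) in simp_all)

lemma feasible_pos_floor_ge_row_end:
  assumes pos: "\<forall>i. 0 < w i \<and> 0 < h i" and "j \<le> length \<sigma>"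
    and row: "\<And>m. m < j \<Longrightarrow> x (\<sigma> ! m) = prefix_width w \<sigma> m \<and> y (\<sigma> ! m) = 0"
    and feas: "feasible_pos W w h (set (take j \<sigma>)) x y r a 0"
  shows "prefix_width w \<sigma> j \<le> a"
proof (rule ccontr)
  assume "\<not> prefix_width w \<sigma> j \<le> a"
  moreover have "0 \<le> a"
    using feas by (simp add: feasible_pos_def)
  ultimately obtain m where m: "m < j" "prefix_width w \<sigma> m \<le> a" "a < prefix_width w \<sigma> (Suc m)"
    unfolding prefix_width_def by (meson not_le partial_sum_interval)
  then have "\<sigma> ! m \<in> set (take j \<sigma>)"
    using assms(2) by (auto simp: in_set_conv_nth)
  then have "a + w r \<le> x (\<sigma> ! m) \<or> x (\<sigma> ! m) + w (\<sigma> ! m) \<le> a \<or>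
             h r \<le> y (\<sigma> ! m) \<or> y (\<sigma> ! m) + h (\<sigma> ! m) \<le> 0"
    using feasible_pos_separated[OF pos feas] by simp
  moreover have "0 < w r" "0 < h r" "0 < h (\<sigma> ! m)"
    using pos by auto
  ultimately show False
    using m row[OF m(1)] by (simp add: prefix_width_Suc)
qed

lemma BL_prefix_on_floor:
  assumes BL: "is_BL_packing W w h \<sigma> x y" and pos: "\<forall>i. 0 < w i \<and> 0 < h i"
    and "j < length \<sigma>" "prefix_width w \<sigma> (Suc j) \<le> W"
  shows "x (\<sigma> ! j) = prefix_width w \<sigma> j \<and> y (\<sigma> ! j) = 0"
  using assms(3,4)
proof (induction j rule: less_induct)
  case (less j)
  have row: "x (\<sigma> ! m) = prefix_width w \<sigma> m \<and> y (\<sigma> ! m) = 0" if "m < j" for m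
  proof (rule less.IH[OF that])
    have "prefix_width w \<sigma> (Suc m) \<le> prefix_width w \<sigma> (Suc j)"
      by (rule prefix_width_mono) (use pos that in \<open>auto simp: less_imp_le\<close>)
    then show "prefix_width w \<sigma> (Suc m) \<le> W"
      using less.prems(2) by linarith
  qed (use that less.prems(1) in simp)
  note at_j = is_BL_packingD[OF BL less.prems(1)]
  have "feasible_pos W w h (set (take j \<sigma>)) x y (\<sigma> ! j) (prefix_width w \<sigma> j) 0"
    using feasible_pos_floor_row_end[OF pos _ row] less.prems by (simp add: prefix_width_Suc)
  then have "y (\<sigma> ! j) < 0 \<or> (y (\<sigma> ! j) = 0 \<and> x (\<sigma> ! j) \<le> prefix_width w \<sigma> j)"
    using at_j(2) by blast
  moreover have "0 \<le> y (\<sigma> ! j)"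
    using at_j(1) by (simp add: feasible_pos_def)
  ultimately have "y (\<sigma> ! j) = 0" "x (\<sigma> ! j) \<le> prefix_width w \<sigma> j"
    by auto
  moreover have "prefix_width w \<sigma> j \<le> x (\<sigma> ! j)"
    using feasible_pos_floor_ge_row_end[OF pos _ row] at_j(1) less.prems(1) \<open>y (\<sigma> ! j) = 0\<close>
    by fastforce
  ultimately show ?case
    by simp
qed

lemma is_ordering_length: "is_ordering n \<sigma> \<Longrightarrow> length \<sigma> = n"
  unfolding is_ordering_def using distinct_card by fastforce

lemma is_ordering_bij_betw: "is_ordering n \<sigma> \<Longrightarrow> bij_betw (nth \<sigma>) {..<n} {..<n}"
  using is_ordering_length by (auto simp: is_ordering_def intro: bij_betw_nth)

lemma is_ordering_nth_less: "is_ordering n \<sigma> \<Longrightarrow> i < n \<Longrightarrow> \<sigma> ! i < n"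
  using is_ordering_bij_betw bij_betwE by blast

lemma is_ordering_inj_on: "is_ordering n \<sigma> \<Longrightarrow> inj_on (nth \<sigma>) {..<n}"
  using is_ordering_bij_betw bij_betw_imp_inj_on by blast

lemma is_ordering_nth_eq_iff:
  "is_ordering n \<sigma> \<Longrightarrow> i < n \<Longrightarrow> j < n \<Longrightarrow> \<sigma> ! i = \<sigma> ! j \<longleftrightarrow> i = j"
  using is_ordering_length nth_eq_iff_index_eq by (fastforce simp: is_ordering_def)

definition square_side :: "nat \<Rightarrow> nat \<Rightarrow> nat \<Rightarrow> real" where
  "square_side M N i = (if i < M then real N else 1)"

lemma square_side_pos: "0 < N \<Longrightarrow> 0 < square_side M N i"
  by (simp add: square_side_def)

lemma square_side_le: "0 < N \<Longrightarrow> square_side M N i \<le> real N"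
  by (simp add: square_side_def)

lemma square_side_le_width: "0 < N \<Longrightarrow> square_side M N i \<le> real (M * N + 1)"
  by (cases M) (auto simp: square_side_def)

lemma sum_square_side: "sum (square_side M N) {..<M + N} = real (M * N) + real N"
proof -
  have "sum (square_side M N) {..<M} = (\<Sum>i<M. real N)"
    by (rule sum.cong) (auto simp: square_side_def)
  moreover have "sum (square_side M N) {M..<M + N} = (\<Sum>i = M..<M + N. 1)"
    by (rule sum.cong) (auto simp: square_side_def)
  ultimately show ?thesis
    using sum.union_disjoint[of "{..<M}" "{M..<M + N}" "square_side M N"]
    by (simp add: ivl_disj_un_one ivl_disj_int_one)
qed

lemma prefix_width_le_before_big:
  assumes ord: "is_ordering (M + N) \<sigma>" and "l \<le> e" "e < M + N" "\<sigma> ! e < M"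
  shows "prefix_width (square_side M N) \<sigma> l \<le> real (M * N)"
proof -
  have "inj_on (nth \<sigma>) {..<l}"
    by (rule inj_on_subset[OF is_ordering_inj_on[OF ord]]) (use assms in auto)
  then have "prefix_width (square_side M N) \<sigma> l = sum (square_side M N) (nth \<sigma> ` {..<l})"
    by (simp add: prefix_width_def sum.reindex)
  also have "\<dots> \<le> sum (square_side M N) ({..<M + N} - {\<sigma> ! e})"
  proof (rule sum_mono2)
    show "nth \<sigma> ` {..<l} \<subseteq> {..<M + N} - {\<sigma> ! e}"
      using is_ordering_nth_less[OF ord] is_ordering_nth_eq_iff[OF ord] assms(2,3) by auto
  qed (auto simp: square_side_def)
  also have "\<dots> = real (M * N)"
    using sum_square_side[of M N] is_ordering_nth_less[OF ord assms(3)] assms(4)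
    by (simp add: sum_diff1 square_side_def)
  finally show ?thesis .
qed

lemma BL_on_floor_before_big:
  assumes ord: "is_ordering (M + N) \<sigma>" and "0 < N"
    and BL: "is_BL_packing (real (M * N + 1)) (square_side M N) (square_side M N) \<sigma> x y"
    and "l < e" "e < M + N" "\<sigma> ! e < M"
  shows "x (\<sigma> ! l) = prefix_width (square_side M N) \<sigma> l \<and> y (\<sigma> ! l) = 0"
proof (rule BL_prefix_on_floor[OF BL])
  show "prefix_width (square_side M N) \<sigma> (Suc l) \<le> real (M * N + 1)"
    using prefix_width_le_before_big[OF ord, of "Suc l" e] assms(4-6) by simp
qed (use assms square_side_pos is_ordering_length[OF ord] in auto)

lemma prefix_width_square_side:
  "prefix_width (square_side M N) \<sigma> j =
     real N * card {i. i < j \<and> \<sigma> ! i < M} + card {i. i < j \<and> M \<le> \<sigma> ! i}"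
proof -
  have "prefix_width (square_side M N) \<sigma> j = (\<Sum>i<j. if \<sigma> ! i < M then real N else 1)"
    by (simp add: prefix_width_def square_side_def)
  also have "\<dots> = real N * card ({..<j} \<inter> {i. \<sigma> ! i < M}) + card ({..<j} \<inter> - {i. \<sigma> ! i < M})"
    by (simp add: sum.If_cases)
  also have "{..<j} \<inter> {i. \<sigma> ! i < M} = {i. i < j \<and> \<sigma> ! i < M}"
    by auto
  also have "{..<j} \<inter> - {i. \<sigma> ! i < M} = {i. i < j \<and> M \<le> \<sigma> ! i}"
    by auto
  finally show ?thesis .
qed

lemma prefix_width_unit_run:
  assumes "a \<le> b" "\<And>i. a \<le> i \<Longrightarrow> i < b \<Longrightarrow> M \<le> \<sigma> ! i"
  shows "prefix_width (square_side M N) \<sigma> b = prefix_width (square_side M N) \<sigma> a + real (b - a)"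
proof -
  have "prefix_width (square_side M N) \<sigma> b =
      prefix_width (square_side M N) \<sigma> a + (\<Sum>i = a..<b. square_side M N (\<sigma> ! i))"
    unfolding prefix_width_def atLeast0LessThan[symmetric]
    using assms(1) by (simp add: sum.atLeastLessThan_concat)
  also have "(\<Sum>i = a..<b. square_side M N (\<sigma> ! i)) = (\<Sum>i = a..<b. 1)"
    using assms(2) by (intro sum.cong) (auto simp: square_side_def not_less[symmetric])
  finally show ?thesis
    by simp
qed

lemma unit_run_length_le:
  assumes ord: "is_ordering (M + N) \<sigma>" and "b \<le> M + N"
    and units: "\<And>i. a \<le> i \<Longrightarrow> i < b \<Longrightarrow> M \<le> \<sigma> ! i"
    and "e < M + N" "e \<notin> {a..<b}" "M \<le> \<sigma> ! e"
  shows "b - a \<le> N - 1"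
proof -
  have "inj_on (nth \<sigma>) {a..<b}"
    by (rule inj_on_subset[OF is_ordering_inj_on[OF ord]]) (use assms in auto)
  then have "b - a = card (nth \<sigma> ` {a..<b})"
    by (simp add: card_image)
  also have "\<dots> \<le> card ({M..<M + N} - {\<sigma> ! e})"
  proof (rule card_mono)
    show "nth \<sigma> ` {a..<b} \<subseteq> {M..<M + N} - {\<sigma> ! e}"
      using is_ordering_nth_less[OF ord] is_ordering_nth_eq_iff[OF ord] assms
      by (fastforce simp: atLeastLessThan_iff)
  qed simp
  also have "\<dots> = N - 1"
    using is_ordering_nth_less[OF ord assms(4)] assms(6) by simp
  finally show ?thesis .
qed

lemma card_big_positions:
  assumes ord: "is_ordering (M + N) \<sigma>"
  shows "card {i. i < M + N \<and> \<sigma> ! i < M} = M"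
proof -
  have "inj_on (nth \<sigma>) {i. i < M + N \<and> \<sigma> ! i < M}"
    by (rule inj_on_subset[OF is_ordering_inj_on[OF ord]]) auto
  moreover have "nth \<sigma> ` {i. i < M + N \<and> \<sigma> ! i < M} = {..<M}"
  proof (intro equalityI subsetI)
    fix u assume "u \<in> {..<M}"
    then have "u \<in> nth \<sigma> ` {..<M + N}"
      using bij_betw_imp_surj_on[OF is_ordering_bij_betw[OF ord]] by auto
    then show "u \<in> nth \<sigma> ` {i. i < M + N \<and> \<sigma> ! i < M}"
      using \<open>u \<in> {..<M}\<close> by auto
  qed auto
  ultimately show ?thesis
    by (metis card_image card_lessThan)
qed

lemma unit_gap_narrow:
  assumes ord: "is_ordering (M + N) \<sigma>"
    and pqr: "p < q" "q < r" "r < M + N" "M \<le> \<sigma> ! p" "\<sigma> ! q < M" "M \<le> \<sigma> ! r"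
    and "a \<le> b" and b: "b \<le> M + N" and units: "\<And>i. a \<le> i \<Longrightarrow> i < b \<Longrightarrow> M \<le> \<sigma> ! i"
  shows "prefix_width (square_side M N) \<sigma> b \<le> prefix_width (square_side M N) \<sigma> a + (real N - 1)"
proof -
  have "b - a \<le> N - 1"
  proof (cases "b \<le> q")
    case True
    show ?thesis
      by (rule unit_run_length_le[OF ord _ units pqr(3) _ pqr(6)]) (use True pqr b in auto)
  next
    case False
    then have "q < a"
      using units[of q] pqr(5) by fastforce
    show ?thesis
      by (rule unit_run_length_le[OF ord _ units _ _ pqr(4)]) (use \<open>q < a\<close> pqr b in auto)
  qed
  moreover have "0 < N"
    using pqr(3,6) is_ordering_nth_less[OF ord] by fastforce
  ultimately show ?thesis
    using prefix_width_unit_run[OF \<open>a \<le> b\<close> units] by (simp add: of_nat_diff)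
qed

lemma prefix_width_ge_if_bigs_before:
  assumes ord: "is_ordering (M + N) \<sigma>"
    and early_units: "2 \<le> card {i. i < M - 1 \<and> M \<le> \<sigma> ! i}"
    and "f < M + N" "\<sigma> ! f < M"
    and bigs_before: "\<And>i. i < M + N \<Longrightarrow> \<sigma> ! i < M \<Longrightarrow> i \<noteq> f \<Longrightarrow> i < c"
  shows "real N * (M - 1) + 2 \<le> prefix_width (square_side M N) \<sigma> c"
proof -
  have "M - 1 = card ({i. i < M + N \<and> \<sigma> ! i < M} - {f})"
    using card_big_positions[OF ord] assms(3,4) by simp
  also have "\<dots> \<le> card {i. i < c \<and> \<sigma> ! i < M}"
    using bigs_before by (intro card_mono) auto
  finally have bigs: "M - 1 \<le> card {i. i < c \<and> \<sigma> ! i < M}" .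
  also have "\<dots> \<le> c"
    using card_mono[of "{..<c}" "{i. i < c \<and> \<sigma> ! i < M}"] by auto
  finally have "card {i. i < M - 1 \<and> M \<le> \<sigma> ! i} \<le> card {i. i < c \<and> M \<le> \<sigma> ! i}"
    by (intro card_mono) auto
  then have "2 \<le> card {i. i < c \<and> M \<le> \<sigma> ! i}"
    using early_units by linarith
  moreover have "real N * (M - 1) \<le> real N * card {i. i < c \<and> \<sigma> ! i < M}"
    using bigs by (intro mult_left_mono) simp_all
  ultimately show ?thesis
    unfolding prefix_width_square_side by linarith
qed

text \<open>Let c be the position right after the last big square entirely left of t, and d the first
  big square from c on. The unit squares in between leave a gap narrower than N, unless d is the
  last big square; then all other big squares and two unit squares lie left of t, so t + N exceeds
  the strip width.\<close>
lemma no_gap_for_last_big: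
  fixes M N :: nat and \<sigma> :: "nat list" and t :: real
  defines "X \<equiv> prefix_width (square_side M N) \<sigma>"
  assumes ord: "is_ordering (M + N) \<sigma>"
    and early_units: "2 \<le> card {i. i < M - 1 \<and> M \<le> \<sigma> ! i}"
    and pqr: "p < q" "q < r" "r < M + N" "M \<le> \<sigma> ! p" "\<sigma> ! q < M" "M \<le> \<sigma> ! r"
    and last_big: "f < M + N" "\<sigma> ! f < M" "\<And>i. i < M + N \<Longrightarrow> \<sigma> ! i < M \<Longrightarrow> i \<le> f"
    and t: "0 \<le> t" "t + N \<le> real (M * N + 1)"
    and sep: "\<And>j. j < f \<Longrightarrow> \<sigma> ! j < M \<Longrightarrow> X j + N \<le> t \<or> t + N \<le> X j"
  shows False
proof -
  define L where "L = {j. j < f \<and> \<sigma> ! j < M \<and> X j + N \<le> t}"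
  define c where "c = (if L = {} then 0 else Suc (Max L))"
  have "finite L"
    by (simp add: L_def)
  have Max_L: "Max L < f" "X (Max L) + N \<le> t" "\<sigma> ! Max L < M" if "L \<noteq> {}"
    using Max_in[OF \<open>finite L\<close> that] by (simp_all add: L_def)
  have "c \<le> f"
    using Max_L(1) by (simp add: c_def Suc_leI)
  have X_c: "X c \<le> t"
    using Max_L(2,3) t(1)
    by (simp add: c_def X_def prefix_width_Suc square_side_def prefix_width_def)
  have right: "t + N \<le> X j" if "c \<le> j" "j < f" "\<sigma> ! j < M" for j
  proof -
    have "j \<notin> L"
      using that Max_ge[OF \<open>finite L\<close>] by (fastforce simp: c_def split: if_splits)
    then show ?thesis
      using sep that by (auto simp: L_def)
  qed
  define d where "d = (LEAST l. c \<le> l \<and> \<sigma> ! l < M)"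
  have d: "c \<le> d" "\<sigma> ! d < M" "d \<le> f"
    using LeastI[of "\<lambda>l. c \<le> l \<and> \<sigma> ! l < M" f] Least_le[of "\<lambda>l. c \<le> l \<and> \<sigma> ! l < M" f]
      \<open>c \<le> f\<close> last_big(2) by (simp_all add: d_def)
  have units: "M \<le> \<sigma> ! i" if "c \<le> i" "i < d" for i
    using not_less_Least[of i "\<lambda>l. c \<le> l \<and> \<sigma> ! l < M"] that by (auto simp: d_def)
  show False
  proof (cases "d = f")
    case False
    then have "t + N \<le> X d"
      using right d by simp
    moreover have "X d \<le> X c + (real N - 1)"
      unfolding X_def using d(1,3) last_big(1) units by (intro unit_gap_narrow[OF ord pqr]) auto
    ultimately show False
      using X_c by simp
  next
    case True
    then have "i < c" if "i < M + N" "\<sigma> ! i < M" "i \<noteq> f" for i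
      using units last_big(3)[OF that(1,2)] that(2,3) by (meson le_less not_le)
    then have "real N * (M - 1) + 2 \<le> X c"
      unfolding X_def by (rule prefix_width_ge_if_bigs_before[OF ord early_units last_big(1,2)])
    moreover have "1 \<le> M"
      using pqr(5) by simp
    ultimately show False
      using X_c t(2) by (simp add: of_nat_diff algebra_simps)
  qed
qed

lemma BL_packing_height_ge_if_blocked:
  assumes ord: "is_ordering (M + N) \<sigma>"
    and BL: "is_BL_packing (real (M * N + 1)) (square_side M N) (square_side M N) \<sigma> x y"
    and early_units: "2 \<le> card {i. i < M - 1 \<and> M \<le> \<sigma> ! i}"
    and pqr: "p < q" "q < r" "r < M + N" "M \<le> \<sigma> ! p" "\<sigma> ! q < M" "M \<le> \<sigma> ! r"
  shows "2 * real N \<le> packing_height (M + N) (square_side M N) y"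
proof -
  define X where "X = prefix_width (square_side M N) \<sigma>"
  define f where "f = Max {i. i < M + N \<and> \<sigma> ! i < M}"
  define F where "F = \<sigma> ! f"
  have "q \<in> {i. i < M + N \<and> \<sigma> ! i < M}"
    using pqr by simp
  then have "f \<in> {i. i < M + N \<and> \<sigma> ! i < M}"
    unfolding f_def by (intro Max_in) auto
  then have f: "f < M + N" "F < M" "\<And>i. i < M + N \<Longrightarrow> \<sigma> ! i < M \<Longrightarrow> i \<le> f"
    by (auto simp: f_def F_def)
  have "0 < N"
    using pqr(3,6) is_ordering_nth_less[OF ord] by fastforce
  then have pos: "\<forall>i. 0 < square_side M N i \<and> 0 < square_side M N i"
    by (simp add: square_side_pos)
  have F_side: "square_side M N F = real N"
    using f(2) by (simp add: square_side_def)
  have feas_F: "feasible_pos (real (M * N + 1)) (square_side M N) (square_side M N)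
      (set (take f \<sigma>)) x y F (x F) (y F)"
    using is_BL_packingD(1)[OF BL, of f] f(1) is_ordering_length[OF ord] by (simp add: F_def)
  then have "0 \<le> x F" "x F + N \<le> real (M * N + 1)" "0 \<le> y F"
    using F_side by (simp_all add: feasible_pos_def)
  have "real N \<le> y F"
  proof (rule ccontr)
    assume low: "\<not> real N \<le> y F"
    have "X j + N \<le> x F \<or> x F + N \<le> X j" if "j < f" "\<sigma> ! j < M" for j
    proof -
      have "\<sigma> ! j \<in> set (take f \<sigma>)"
        using that f(1) is_ordering_length[OF ord] by (auto simp: in_set_conv_nth)
      then have "x F + N \<le> x (\<sigma> ! j) \<or> x (\<sigma> ! j) + N \<le> x F \<or> y F + N \<le> y (\<sigma> ! j) \<or> y (\<sigma> ! j) + N \<le> y F"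
        using feasible_pos_separated[OF pos feas_F, of "\<sigma> ! j"] F_side that(2)
        by (simp add: square_side_def)
      moreover have "x (\<sigma> ! j) = X j" "y (\<sigma> ! j) = 0"
        using BL_on_floor_before_big[OF ord \<open>0 < N\<close> BL that(1) f(1)] f(2) by (simp_all add: X_def F_def)
      ultimately show ?thesis
        using low \<open>0 \<le> y F\<close> \<open>0 < N\<close> by auto
    qed
    then show False
      using no_gap_for_last_big[OF ord early_units pqr f(1) _ f(3) \<open>0 \<le> x F\<close> \<open>x F + N \<le> _\<close>] f(2)
      unfolding X_def F_def by blast
  qed
  then show ?thesis
    using packing_height_ge[OF is_ordering_nth_less[OF ord f(1)], where h = "square_side M N" and y = y] F_side
    by (simp add: F_def)
qed

lemma BL_packing_height_le_if_last_big:
  assumes ord: "is_ordering (M + N) \<sigma>" and "0 < N" and last: "last \<sigma> < M"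
    and BL: "is_BL_packing (real (M * N + 1)) (square_side M N) (square_side M N) \<sigma> x y"
  shows "packing_height (M + N) (square_side M N) y \<le> 2 * real N"
proof -
  define e where "e = M + N - 1"
  have "e < M + N"
    using \<open>0 < N\<close> by (simp add: e_def)
  moreover have "\<sigma> \<noteq> []"
    using \<open>0 < N\<close> is_ordering_length[OF ord] by auto
  ultimately have "\<sigma> ! e < M"
    using last last_conv_nth[of \<sigma>] is_ordering_length[OF ord] by (simp add: e_def)
  have floor: "y (\<sigma> ! l) = 0" if "l < e" for l
    using BL_on_floor_before_big[OF ord \<open>0 < N\<close> BL that \<open>e < M + N\<close> \<open>\<sigma> ! e < M\<close>] by simp
  have "feasible_pos (real (M * N + 1)) (square_side M N) (square_side M N)
      (set (take e \<sigma>)) x y (\<sigma> ! e) 0 (real N)"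
    unfolding feasible_pos_def
  proof (intro conjI ballI)
    show "0 + square_side M N (\<sigma> ! e) \<le> real (M * N + 1)"
      using square_side_le_width[OF \<open>0 < N\<close>] by simp
    fix i assume "i \<in> set (take e \<sigma>)"
    then obtain l where "l < e" "i = \<sigma> ! l"
      using \<open>e < M + N\<close> is_ordering_length[OF ord] by (auto simp: in_set_conv_nth)
    then have "y i + square_side M N i \<le> real N"
      using floor square_side_le[OF \<open>0 < N\<close>] by simp
    then show "open_rect 0 (real N) (square_side M N (\<sigma> ! e)) (square_side M N (\<sigma> ! e)) \<inter>
        open_rect (x i) (y i) (square_side M N i) (square_side M N i) = {}"
      using open_rect_disjoint_iff square_side_pos[OF \<open>0 < N\<close>] by blast
  qed simp_all
  then have "y (\<sigma> ! e) \<le> real N"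
    using is_BL_packingD(2)[OF BL, of e] \<open>e < M + N\<close> is_ordering_length[OF ord] by fastforce
  show ?thesis
  proof (rule packing_height_le)
    fix i assume "i < M + N"
    then obtain l where "l < M + N" "i = \<sigma> ! l"
      using bij_betw_imp_surj_on[OF is_ordering_bij_betw[OF ord]] by (metis imageE lessThan_iff)
    moreover have "l < e \<or> l = e"
      using \<open>l < M + N\<close> by (auto simp: e_def)
    ultimately have "y i \<le> real N"
      using floor \<open>y (\<sigma> ! e) \<le> real N\<close> by auto
    then show "y i + square_side M N i \<le> 2 * real N"
      using square_side_le[OF \<open>0 < N\<close>, of M i] by linarith
  qed (use \<open>0 < N\<close> in simp)
qed

lemma separated_multiples:
  fixes i j :: nat and c :: real
  assumes "i \<noteq> j" "0 \<le> c"
  shows "c * i + c \<le> c * j \<or> c * j + c \<le> c * i"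
proof -
  have "real i + 1 \<le> real j \<or> real j + 1 \<le> real i"
    using assms(1) by linarith
  then show ?thesis
    using mult_left_mono[OF _ assms(2)] by (metis distrib_left mult.right_neutral)
qed

lemma square_side_packing_of_height_N:
  assumes "0 < M" "0 < N"
  obtains x y where "feasible_packing (real (M * N + 1)) (M + N) (square_side M N) (square_side M N) x y"
    "packing_height (M + N) (square_side M N) y = real N"
proof
  define x where "x i = (if i < M then real N * real i else real (M * N))" for i
  define y where "y i = (if i < M then 0 else real i - real M)" for i
  have big_left: "real N * real i + real N \<le> real (M * N)" if "i < M" for i
  proof -
    have "real N * (real i + 1) \<le> real N * real M"
      using that by (intro mult_left_mono) simp_all
    then show ?thesis
      by (simp add: algebra_simps)
  qed
  show "feasible_packing (real (M * N + 1)) (M + N) (square_side M N) (square_side M N) x y"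
    unfolding feasible_packing_def
  proof (intro conjI allI impI)
    fix i assume "i < M + N"
    show "0 \<le> x i" "0 \<le> y i"
      by (simp_all add: x_def y_def)
    show "x i + square_side M N i \<le> real (M * N + 1)"
      using big_left[of i] by (cases "i < M") (simp_all add: x_def square_side_def mult.commute)
  next
    fix i j assume "i < M + N" "j < M + N" "i \<noteq> j"
    then have "x i + square_side M N i \<le> x j \<or> x j + square_side M N j \<le> x i \<or>
        y i + square_side M N i \<le> y j \<or> y j + square_side M N j \<le> y i"
      using big_left[of i] big_left[of j] separated_multiples[of i j "real N"] separated_multiples[of i j 1]
      by (cases "i < M"; cases "j < M") (auto simp: x_def y_def square_side_def)
    then show "open_rect (x i) (y i) (square_side M N i) (square_side M N i) \<inter>
        open_rect (x j) (y j) (square_side M N j) (square_side M N j) = {}"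
      using open_rect_disjoint_iff square_side_pos[OF assms(2)] by blast
  qed
  show "packing_height (M + N) (square_side M N) y = real N"
  proof (rule antisym)
    show "packing_height (M + N) (square_side M N) y \<le> real N"
      by (rule packing_height_le) (auto simp: y_def square_side_def assms)
    show "real N \<le> packing_height (M + N) (square_side M N) y"
      using packing_height_ge[of 0 "M + N" y "square_side M N"] assms
      by (simp add: y_def square_side_def)
  qed
qed

lemma h_opt_square_side:
  assumes "0 < M" "0 < N"
  shows "h_opt (real (M * N + 1)) (M + N) (square_side M N) (square_side M N) = real N"
  unfolding h_opt_def
proof (rule cInf_eq_minimum)
  show "real N \<in> {packing_height (M + N) (square_side M N) y |x y.
      feasible_packing (real (M * N + 1)) (M + N) (square_side M N) (square_side M N) x y}"
  proof -
    obtain x y where "feasible_packing (real (M * N + 1)) (M + N) (square_side M N) (square_side M N) x y"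
      "packing_height (M + N) (square_side M N) y = real N"
      by (rule square_side_packing_of_height_N[OF assms])
    then show ?thesis
      by force
  qed
  fix H assume "H \<in> {packing_height (M + N) (square_side M N) y |x y.
      feasible_packing (real (M * N + 1)) (M + N) (square_side M N) (square_side M N) x y}"
  then obtain x y where "H = packing_height (M + N) (square_side M N) y"
    "feasible_packing (real (M * N + 1)) (M + N) (square_side M N) (square_side M N) x y"
    by blast
  then show "real N \<le> H"
    using packing_height_ge[of 0 "M + N" y "square_side M N"] assms
    by (auto simp: feasible_packing_def square_side_def)
qed

text \<open>For M = k + 4 and N = 2k + 3: k + 2 unit squares, the big squares 0, ..., k + 2, the other
  k + 1 unit squares, and finally the big square k + 3.\<close>
definition initial_ordering :: "nat \<Rightarrow> nat list" where
  "initial_ordering k = [k + 4..<2 * k + 6] @ [0..<k + 3] @ [2 * k + 6..<3 * k + 7] @ [k + 3]"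

lemma is_ordering_initial_ordering: "is_ordering (k + 4 + (2 * k + 3)) (initial_ordering k)"
  unfolding is_ordering_def initial_ordering_def by auto

lemma last_initial_ordering: "last (initial_ordering k) = k + 3"
  by (simp add: initial_ordering_def)

lemma initial_ordering_nth:
  "i < k + 2 \<Longrightarrow> initial_ordering k ! i = k + 4 + i"
  "k + 2 \<le> i \<Longrightarrow> i < 2 * k + 5 \<Longrightarrow> initial_ordering k ! i = i - (k + 2)"
  "2 * k + 5 \<le> i \<Longrightarrow> i < 3 * k + 6 \<Longrightarrow> initial_ordering k ! i = i + 1"
  by (auto simp: initial_ordering_def nth_append)

lemma k_perm_unchanged_card:
  assumes "k_perm n k \<sigma> \<tau>" "A \<subseteq> {..<length \<sigma>}"
  shows "card A - k \<le> card {i \<in> A. \<tau> ! i = \<sigma> ! i}"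
proof -
  define C where "C = {i. i < length \<sigma> \<and> \<sigma> ! i \<noteq> \<tau> ! i}"
  have "card C \<le> k"
    using assms(1) by (simp add: k_perm_def C_def)
  moreover have "{i \<in> A. \<tau> ! i = \<sigma> ! i} = A - C"
    using assms(2) by (auto simp: C_def)
  ultimately show ?thesis
    using diff_card_le_card_Diff[of C A] by (simp add: C_def)
qed

lemma k_perm_initial_ordering_blocked:
  assumes "k_perm (k + 4 + (2 * k + 3)) k (initial_ordering k) \<sigma>"
  shows "2 \<le> card {i. i < k + 4 - 1 \<and> k + 4 \<le> \<sigma> ! i}"
    and "\<exists>p q r. p < q \<and> q < r \<and> r < k + 4 + (2 * k + 3) \<and>
           k + 4 \<le> \<sigma> ! p \<and> \<sigma> ! q < k + 4 \<and> k + 4 \<le> \<sigma> ! r"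
proof -
  have len: "length (initial_ordering k) = 3 * k + 7"
    by (simp add: initial_ordering_def)
  define U where "U A = {i \<in> A. \<sigma> ! i = initial_ordering k ! i}" for A
  have unchanged: "card A - k \<le> card (U A)" if "A \<subseteq> {..<3 * k + 7}" for A
    unfolding U_def using k_perm_unchanged_card[OF assms] that len by simp
  have "2 \<le> card (U {..<k + 2})"
    using unchanged[of "{..<k + 2}"] by simp
  also have "\<dots> \<le> card {i. i < k + 4 - 1 \<and> k + 4 \<le> \<sigma> ! i}"
    by (rule card_mono) (auto simp: U_def initial_ordering_nth)
  finally show "2 \<le> card {i. i < k + 4 - 1 \<and> k + 4 \<le> \<sigma> ! i}" .
  have nonempty: "U A \<noteq> {}" if "A \<subseteq> {..<3 * k + 7}" "k < card A" for A
  proof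
    assume "U A = {}"
    then show False
      using unchanged[OF that(1)] that(2) by simp
  qed
  obtain p q r where "p \<in> U {..<k + 2}" "q \<in> U {k + 2..<2 * k + 5}" "r \<in> U {2 * k + 5..<3 * k + 6}"
    using nonempty[of "{..<k + 2}"] nonempty[of "{k + 2..<2 * k + 5}"]
      nonempty[of "{2 * k + 5..<3 * k + 6}"] by fastforce
  then show "\<exists>p q r. p < q \<and> q < r \<and> r < k + 4 + (2 * k + 3) \<and>
           k + 4 \<le> \<sigma> ! p \<and> \<sigma> ! q < k + 4 \<and> k + 4 \<le> \<sigma> ! r"
    by (intro exI[of _ p] exI[of _ q] exI[of _ r]) (auto simp: U_def initial_ordering_nth)
qed

lemma BL_height_square_side:
  assumes "is_ordering (M + N) \<sigma>" "0 < N"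
  obtains x y where "is_BL_packing (real (M * N + 1)) (square_side M N) (square_side M N) \<sigma> x y"
    "BL_height (real (M * N + 1)) (M + N) (square_side M N) (square_side M N) \<sigma> =
       packing_height (M + N) (square_side M N) y"
proof -
  obtain x y where "is_BL_packing (real (M * N + 1)) (square_side M N) (square_side M N) \<sigma> x y"
    using is_BL_packing_exists assms square_side_pos square_side_le_width
    by (metis is_ordering_def)
  then show ?thesis
    using that BL_height_eq[OF assms(1)] by blast
qed

lemma rtranclp_improvement_step_from_local_optimum:
  "local_optimum W n w h k \<sigma>0 \<Longrightarrow> (improvement_step W n w h k)\<^sup>*\<^sup>* \<sigma>0 \<sigma> \<longleftrightarrow> \<sigma> = \<sigma>0"
  unfolding local_optimum_def by (auto elim: converse_rtranclpE)

lemma initial_ordering_local_optimum: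
  fixes k :: nat
  defines "M \<equiv> k + 4" and "N \<equiv> 2 * k + 3"
  shows "BL_height (real (M * N + 1)) (M + N) (square_side M N) (square_side M N) (initial_ordering k)
           = 2 * real N"
    and "local_optimum (real (M * N + 1)) (M + N) (square_side M N) (square_side M N) k (initial_ordering k)"
proof -
  let ?H = "BL_height (real (M * N + 1)) (M + N) (square_side M N) (square_side M N)"
  have "0 < N"
    by (simp add: N_def)
  have lower: "2 * real N \<le> ?H \<sigma>" if "k_perm (M + N) k (initial_ordering k) \<sigma>" for \<sigma>
  proof -
    have kp: "k_perm (k + 4 + (2 * k + 3)) k (initial_ordering k) \<sigma>"
      using that by (simp add: M_def N_def)
    have "is_ordering (M + N) \<sigma>"
      using that by (simp add: k_perm_def)
    then obtain x y where BL: "is_BL_packing (real (M * N + 1)) (square_side M N) (square_side M N) \<sigma> x y"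
      and "?H \<sigma> = packing_height (M + N) (square_side M N) y"
      using BL_height_square_side \<open>0 < N\<close> by blast
    moreover obtain p q r where "p < q" "q < r" "r < M + N" "M \<le> \<sigma> ! p" "\<sigma> ! q < M" "M \<le> \<sigma> ! r"
      using k_perm_initial_ordering_blocked(2)[OF kp] by (auto simp: M_def N_def)
    ultimately show ?thesis
      using BL_packing_height_ge_if_blocked[OF \<open>is_ordering (M + N) \<sigma>\<close> BL]
        k_perm_initial_ordering_blocked(1)[OF kp] by (simp add: M_def N_def)
  qed
  have ord: "is_ordering (M + N) (initial_ordering k)"
    using is_ordering_initial_ordering by (simp add: M_def N_def)
  then obtain x y where
    "is_BL_packing (real (M * N + 1)) (square_side M N) (square_side M N) (initial_ordering k) x y"
    "?H (initial_ordering k) = packing_height (M + N) (square_side M N) y"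
    using BL_height_square_side \<open>0 < N\<close> by blast
  then have "?H (initial_ordering k) \<le> 2 * real N"
    using BL_packing_height_le_if_last_big[OF ord \<open>0 < N\<close>] last_initial_ordering
    by (simp add: M_def)
  moreover have "k_perm (M + N) k (initial_ordering k) (initial_ordering k)"
    using ord by (simp add: k_perm_def)
  ultimately show height: "?H (initial_ordering k) = 2 * real N"
    using lower by (simp add: antisym)
  show "local_optimum (real (M * N + 1)) (M + N) (square_side M N) (square_side M N) k (initial_ordering k)"
    unfolding local_optimum_def improvement_step_def height using lower by (simp add: not_less)
qed

theorem theorem5:
  fixes k :: nat
  shows "\<exists>(W::real) (n::nat) (w::nat \<Rightarrow> real) (h::nat \<Rightarrow> real) (\<sigma>0::nat list).
           0 < W \<and> 0 < n \<and> (\<forall>i<n. 0 < w i \<and> w i \<le> W \<and> h i = w i) \<and>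
           is_ordering n \<sigma>0 \<and>
           (\<exists>\<sigma>. (improvement_step W n w h k)\<^sup>*\<^sup>* \<sigma>0 \<sigma> \<and> local_optimum W n w h k \<sigma>) \<and>
           (\<forall>\<sigma>. (improvement_step W n w h k)\<^sup>*\<^sup>* \<sigma>0 \<sigma> \<and> local_optimum W n w h k \<sigma> \<longrightarrow>
                BL_height W n w h \<sigma> = 2 * h_opt W n w h)"
proof -
  define M N where "M = k + 4" and "N = 2 * k + 3"
  define W w where "W = real (M * N + 1)" and "w = square_side M N"
  have "0 < N"
    by (simp add: N_def)
  have local_opt: "BL_height W (M + N) w w (initial_ordering k) = 2 * real N"
    "local_optimum W (M + N) w w k (initial_ordering k)"
    using initial_ordering_local_optimum[of k] by (simp_all add: M_def N_def W_def w_def)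
  moreover have "h_opt W (M + N) w w = real N"
    unfolding W_def w_def by (rule h_opt_square_side) (simp_all add: M_def N_def)
  moreover have "is_ordering (M + N) (initial_ordering k)"
    using is_ordering_initial_ordering[of k] by (simp add: M_def N_def)
  moreover have "0 < W"
    unfolding W_def of_nat_0_less_iff by simp
  moreover have "0 < w i \<and> w i \<le> W" for i
    using square_side_pos square_side_le_width \<open>0 < N\<close> by (simp add: w_def W_def)
  ultimately show ?thesis
    using rtranclp_improvement_step_from_local_optimum[OF local_opt(2)]
    by (intro exI[of _ W] exI[of _ "M + N"] exI[of _ w] exI[of _ w] exI[of _ "initial_ordering k"])
      (auto simp: M_def)
qed

end
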